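(* Let $\langle\mathcal X,\mathcal C,d,\ell,(x_1,\dots,x_n)\rangle$ be a multiple facility location instance and $1\le k\le n$. Define the feature $f:[n]\to\mathcal X$ by $f(i)=x_i$. Then $$\mathbb E_{S\sim\mathcal U_{k,n}}\big[\textsc{Social-Cost}(\overline y(S))\big]\le\textsc{Social-Opt}+\mathbb E_{S\sim\mathcal U_{k,n}}\big[W(\phi_f^{[n]},\phi_f^S)\big].$$
   Context: A multiple facility location instance consists of a metric space $(\mathcal X,d)$ with $d:\mathcal X\times\mathcal X\to[0,1]$, candidate locations $\mathcal C\subseteq\mathcal X$, a number $\ell\ge1$ of facilities and agent locations $x_1,\dots,x_n$. For $y\in\mathcal C^\ell$, $\mathrm{Cost}_i(y)=\min_{j\in[\ell]}d(x_i,y_j)$, $\textsc{Social-Cost}(y)=\frac1n\sum_i\mathrm{Cost}_i(y)$, $\textsc{Social-Opt}=\min_{y\in\mathcal C^\ell}\textsc{Social-Cost}(y)$, $\textsc{Panel-Cost}(y,S)=\frac1k\sum_{i\in S}\mathrm{Cost}_i(y)$, $\overline y(S)\in\arg\min_{y\in\mathcal C^\ell}\textsc{Panel-Cost}(y,S)$ (minimizers assumed to exist). For nonempty $S\subseteq[n]$, $\phi_f^S=\frac1{|S|}\sum_{i\in S}\delta(f(i))$ with $\delta$ a Dirac mass; $W(\phi,\psi)=\min_\gamma\mathbb E_{(x,y)\sim\gamma}[d(x,y)]$ over couplings $\gamma$ of $\phi,\psi$. $\mathcal U_{k,n}$ is the uniform distribution over size-$k$ subsets of $[n]$. *)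

theory Defs
  imports "HOL-Probability.Probability"
begin

definition metric01 :: "'a set \<Rightarrow> ('a \<Rightarrow> 'a \<Rightarrow> real) \<Rightarrow> bool" where
  "metric01 X d \<longleftrightarrow>
     (\<forall>a\<in>X. \<forall>b\<in>X. 0 \<le> d a b \<and> d a b \<le> 1) \<and>
     (\<forall>a\<in>X. \<forall>b\<in>X. d a b = 0 \<longleftrightarrow> a = b) \<and>
     (\<forall>a\<in>X. \<forall>b\<in>X. d a b = d b a) \<and>
     (\<forall>a\<in>X. \<forall>b\<in>X. \<forall>c\<in>X. d a c \<le> d a b + d b c)"

text \<open>Facility vectors y in C^l, represented as functions on {..<l}.\<close>
definition feasible :: "'a set \<Rightarrow> nat \<Rightarrow> (nat \<Rightarrow> 'a) \<Rightarrow> bool" where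
  "feasible C l y \<longleftrightarrow> (\<forall>j<l. y j \<in> C)"

definition cost :: "('a \<Rightarrow> 'a \<Rightarrow> real) \<Rightarrow> nat \<Rightarrow> (nat \<Rightarrow> 'a) \<Rightarrow> 'a \<Rightarrow> real" where
  "cost d l y xi = Min ((\<lambda>j. d xi (y j)) ` {..<l})"

definition social_cost :: "('a \<Rightarrow> 'a \<Rightarrow> real) \<Rightarrow> nat \<Rightarrow> nat \<Rightarrow> (nat \<Rightarrow> 'a) \<Rightarrow> (nat \<Rightarrow> 'a) \<Rightarrow> real" where
  "social_cost d l n x y = (1 / real n) * (\<Sum>i\<in>{1..n}. cost d l y (x i))"

definition social_opt :: "('a \<Rightarrow> 'a \<Rightarrow> real) \<Rightarrow> 'a set \<Rightarrow> nat \<Rightarrow> nat \<Rightarrow> (nat \<Rightarrow> 'a) \<Rightarrow> real" where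
  "social_opt d C l n x = (INF y\<in>{y. feasible C l y}. social_cost d l n x y)"

definition panel_cost :: "('a \<Rightarrow> 'a \<Rightarrow> real) \<Rightarrow> nat \<Rightarrow> nat \<Rightarrow> (nat \<Rightarrow> 'a) \<Rightarrow> (nat \<Rightarrow> 'a) \<Rightarrow> nat set \<Rightarrow> real" where
  "panel_cost d l k x y S = (1 / real k) * (\<Sum>i\<in>S. cost d l y (x i))"

definition panels :: "nat \<Rightarrow> nat \<Rightarrow> nat set set" where
  "panels k n = {S. S \<subseteq> {1..n} \<and> card S = k}"

definition U :: "nat \<Rightarrow> nat \<Rightarrow> nat set pmf" where
  "U k n = pmf_of_set (panels k n)"

text \<open>Empirical distribution of feature f over nonempty S.\<close>
definition phi :: "(nat \<Rightarrow> 'a) \<Rightarrow> nat set \<Rightarrow> 'a pmf" where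
  "phi f S = map_pmf f (pmf_of_set S)"

definition couplings :: "'a pmf \<Rightarrow> 'a pmf \<Rightarrow> ('a \<times> 'a) pmf set" where
  "couplings p q = {\<gamma>. map_pmf fst \<gamma> = p \<and> map_pmf snd \<gamma> = q}"

definition W :: "('a \<Rightarrow> 'a \<Rightarrow> real) \<Rightarrow> 'a pmf \<Rightarrow> 'a pmf \<Rightarrow> real" where
  "W d p q = (INF \<gamma>\<in>couplings p q. measure_pmf.expectation \<gamma> (\<lambda>(a, b). d a b))"

end

theory Submission
  imports Defs
begin

text \<open>
  For a feasible facility vector y, the map a \<mapsto> Cost(y, a) is 1-Lipschitz, so its averages
  over all agents and over a panel S differ by at most the Wasserstein distance between the
  two empirical distributions (the easy half of Kantorovich-Rubinstein duality).  Applied to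
  ybar S, which minimises the panel cost, this gives
  Social-Cost(ybar S) \<le> Panel-Cost(y, S) + W.  Every agent lies in the same number of
  panels, so the expected panel cost of y is its social cost; it remains to take the
  infimum over y.
\<close>

lemma cost_le_cost_add_dist:
  assumes "metric01 X d" and "C \<subseteq> X" and "l \<ge> 1" and "feasible C l y"
    and "a \<in> X" and "b \<in> X"
  shows "cost d l y a \<le> cost d l y b + d a b"
proof -
  have "(\<lambda>j. d b (y j)) ` {..<l} \<noteq> {}" using \<open>l \<ge> 1\<close> by (simp add: lessThan_empty_iff)
  then obtain j where j: "j < l" "cost d l y b = d b (y j)"
    using Min_in[OF finite_imageI[OF finite_lessThan]] unfolding cost_def by blast
  have "y j \<in> X" using assms(2,4) j unfolding feasible_def by auto
  have "cost d l y a \<le> d a (y j)" unfolding cost_def using j by (intro Min_le) auto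
  also have "\<dots> \<le> d a b + d b (y j)"
    using assms(1,5,6) \<open>y j \<in> X\<close> unfolding metric01_def by blast
  finally show ?thesis using j by simp
qed

lemma couplings_nonempty: "couplings p q \<noteq> {}"
  unfolding couplings_def using map_fst_pair_pmf map_snd_pair_pmf by blast

lemma set_pmf_coupling_subset:
  assumes "\<gamma> \<in> couplings p q"
  shows "set_pmf \<gamma> \<subseteq> set_pmf p \<times> set_pmf q"
  using assms unfolding couplings_def by (force simp: set_map_pmf)

lemma expectation_diff_le_W:
  fixes g :: "'a \<Rightarrow> real"
  assumes "finite (set_pmf p)" and "finite (set_pmf q)"
    and "set_pmf p \<subseteq> X" and "set_pmf q \<subseteq> X"
    and lipschitz: "\<And>a b. a \<in> X \<Longrightarrow> b \<in> X \<Longrightarrow> g a \<le> g b + d a b"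
  shows "measure_pmf.expectation p g - measure_pmf.expectation q g \<le> W d p q"
  unfolding W_def
proof (rule cINF_greatest[OF couplings_nonempty])
  fix \<gamma> assume \<gamma>: "\<gamma> \<in> couplings p q"
  then have marginals: "p = map_pmf fst \<gamma>" "q = map_pmf snd \<gamma>" unfolding couplings_def by auto
  have support: "set_pmf \<gamma> \<subseteq> set_pmf p \<times> set_pmf q"
    using set_pmf_coupling_subset[OF \<gamma>] .
  then have "finite (set_pmf \<gamma>)" using assms(1,2) finite_subset by blast
  note integrable = integrable_measure_pmf_finite[OF this]
  have "measure_pmf.expectation p g - measure_pmf.expectation q g
      = measure_pmf.expectation \<gamma> (\<lambda>z. g (fst z)) - measure_pmf.expectation \<gamma> (\<lambda>z. g (snd z))"
    unfolding marginals integral_map_pmf ..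
  also have "\<dots> = measure_pmf.expectation \<gamma> (\<lambda>z. g (fst z) - g (snd z))"
    by (rule Bochner_Integration.integral_diff[OF integrable integrable, symmetric])
  also have "\<dots> \<le> measure_pmf.expectation \<gamma> (\<lambda>(a, b). d a b)"
  proof (rule integral_mono_AE[OF integrable integrable])
    show "AE z in measure_pmf \<gamma>. g (fst z) - g (snd z) \<le> (case z of (a, b) \<Rightarrow> d a b)"
    proof (rule AE_pmfI, clarify)
      fix a b assume "(a, b) \<in> set_pmf \<gamma>"
      then have "a \<in> X" "b \<in> X" using support assms(3,4) by auto
      then show "g (fst (a, b)) - g (snd (a, b)) \<le> d a b" using lipschitz by fastforce
    qed
  qed
  finally show "measure_pmf.expectation p g - measure_pmf.expectation q g
      \<le> measure_pmf.expectation \<gamma> (\<lambda>(a, b). d a b)" .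
qed

lemma set_pmf_phi: "finite S \<Longrightarrow> S \<noteq> {} \<Longrightarrow> set_pmf (phi x S) = x ` S"
  unfolding phi_def by simp

lemma expectation_phi:
  assumes "finite S" and "S \<noteq> {}"
  shows "measure_pmf.expectation (phi x S) g = (\<Sum>i\<in>S. g (x i)) / real (card S)"
  unfolding phi_def integral_map_pmf using integral_pmf_of_set[OF assms(2,1)] by simp

lemma panelsD:
  assumes "S \<in> panels k n" and "1 \<le> k"
  shows "finite S" "S \<noteq> {}" "S \<subseteq> {1..n}" "card S = k"
  using assms unfolding panels_def by (auto dest: finite_subset)

lemma social_cost_le_panel_cost_add_W:
  assumes "metric01 X d" and "C \<subseteq> X" and "l \<ge> 1" and "feasible C l y"
    and "\<forall>i\<in>{1..n}. x i \<in> X" and "S \<in> panels k n" and "1 \<le> k"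
  shows "social_cost d l n x y \<le> panel_cost d l k x y S + W d (phi x {1..n}) (phi x S)"
proof -
  note S = panelsD[OF assms(6,7)]
  have "n \<noteq> 0" using S(2,3) by auto
  have "measure_pmf.expectation (phi x {1..n}) (cost d l y)
      - measure_pmf.expectation (phi x S) (cost d l y) \<le> W d (phi x {1..n}) (phi x S)"
    using \<open>n \<noteq> 0\<close> S assms(5)
    by (intro expectation_diff_le_W cost_le_cost_add_dist[OF assms(1-4)])
       (auto simp: set_pmf_phi)
  moreover have "measure_pmf.expectation (phi x {1..n}) (cost d l y) = social_cost d l n x y"
    using \<open>n \<noteq> 0\<close> by (simp add: expectation_phi social_cost_def)
  moreover have "measure_pmf.expectation (phi x S) (cost d l y) = panel_cost d l k x y S"
    using S by (simp add: expectation_phi panel_cost_def)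
  ultimately show ?thesis by simp
qed

lemma finite_panels: "finite (panels k n)"
  unfolding panels_def by (rule finite_subset[of _ "Pow {1..n}"]) auto

lemma card_panels: "card (panels k n) = n choose k"
  unfolding panels_def using n_subsets[of "{1..n}" k] by simp

lemma panels_nonempty: "k \<le> n \<Longrightarrow> panels k n \<noteq> {}"
proof -
  assume "k \<le> n"
  then have "{1..k} \<in> panels k n" unfolding panels_def by auto
  then show ?thesis by blast
qed

lemma card_panels_containing:
  assumes "i \<in> {1..n}" and "1 \<le> k"
  shows "card {S \<in> panels k n. i \<in> S} = (n - 1) choose (k - 1)"
proof -
  let ?T = "{T. T \<subseteq> {1..n} - {i} \<and> card T = k - 1}"
  have "bij_betw (insert i) ?T {S \<in> panels k n. i \<in> S}"
  proof (rule bij_betw_byWitness[where f' = "\<lambda>S. S - {i}"])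
    show "insert i ` ?T \<subseteq> {S \<in> panels k n. i \<in> S}"
    proof (rule image_subsetI)
      fix T assume "T \<in> ?T"
      then have T: "T \<subseteq> {1..n} - {i}" "card T = k - 1" by auto
      then have "finite T" "i \<notin> T" using finite_subset by auto
      then show "insert i T \<in> {S \<in> panels k n. i \<in> S}"
        using T assms by (auto simp: panels_def)
    qed
    show "(\<lambda>S. S - {i}) ` {S \<in> panels k n. i \<in> S} \<subseteq> ?T"
      by (auto simp: panels_def dest: finite_subset)
  qed auto
  then have "card {S \<in> panels k n. i \<in> S} = card ?T"
    by (simp add: bij_betw_same_card)
  also have "\<dots> = card ({1..n} - {i}) choose (k - 1)" by (rule n_subsets) simp
  finally show ?thesis using assms(1) by simp
qed

lemma sum_over_panels:
  fixes h :: "nat \<Rightarrow> real"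
  assumes "1 \<le> k"
  shows "(\<Sum>S\<in>panels k n. \<Sum>i\<in>S. h i) = real ((n - 1) choose (k - 1)) * (\<Sum>i\<in>{1..n}. h i)"
proof -
  have "(\<Sum>S\<in>panels k n. \<Sum>i\<in>S. h i) = (\<Sum>S\<in>panels k n. \<Sum>i\<in>{i\<in>{1..n}. i \<in> S}. h i)"
    by (rule sum.cong) (auto simp: panels_def intro!: sum.cong)
  also have "\<dots> = (\<Sum>i\<in>{1..n}. \<Sum>S\<in>{S\<in>panels k n. i \<in> S}. h i)"
    by (rule sum.swap_restrict) (auto simp: finite_panels)
  also have "\<dots> = (\<Sum>i\<in>{1..n}. real ((n - 1) choose (k - 1)) * h i)"
    using card_panels_containing[OF _ assms] by (auto intro!: sum.cong)
  finally show ?thesis by (simp add: sum_distrib_left)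
qed

lemma set_pmf_U: "k \<le> n \<Longrightarrow> set_pmf (U k n) = panels k n"
  unfolding U_def by (simp add: panels_nonempty finite_panels)

lemma integrable_U:
  fixes f :: "nat set \<Rightarrow> real"
  shows "k \<le> n \<Longrightarrow> integrable (measure_pmf (U k n)) f"
  by (rule integrable_measure_pmf_finite) (simp add: set_pmf_U finite_panels)

lemma expectation_U_panel_cost:
  assumes "1 \<le> k" and "k \<le> n"
  shows "measure_pmf.expectation (U k n) (panel_cost d l k x y) = social_cost d l n x y"
proof -
  let ?c = "\<lambda>i. cost d l y (x i)"
  have binomial: "real k * real (n choose k) = real n * real ((n - 1) choose (k - 1))"
    using times_binomial_minus1_eq[of k n] assms by (metis of_nat_mult less_le_trans zero_less_one)
  have "real (n choose k) \<noteq> 0" using assms by simp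
  have "measure_pmf.expectation (U k n) (panel_cost d l k x y)
      = (\<Sum>S\<in>panels k n. panel_cost d l k x y S) / real (n choose k)"
    unfolding U_def card_panels[symmetric]
    using panels_nonempty[OF assms(2)] finite_panels by (rule integral_pmf_of_set)
  also have "\<dots> = (\<Sum>S\<in>panels k n. \<Sum>i\<in>S. ?c i) / (real k * real (n choose k))"
    unfolding panel_cost_def sum_distrib_left[symmetric] by simp
  also have "\<dots> = real ((n - 1) choose (k - 1)) * (\<Sum>i\<in>{1..n}. ?c i)
      / (real n * real ((n - 1) choose (k - 1)))"
    unfolding sum_over_panels[OF assms(1)] binomial ..
  also have "\<dots> = social_cost d l n x y"
    using binomial \<open>real (n choose k) \<noteq> 0\<close> unfolding social_cost_def by auto
  finally show ?thesis .
qed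

lemma expectation_U_le_social_cost_add:
  fixes f w :: "nat set \<Rightarrow> real"
  assumes "1 \<le> k" and "k \<le> n"
    and "\<And>S. S \<in> panels k n \<Longrightarrow> f S \<le> panel_cost d l k x y S + w S"
  shows "measure_pmf.expectation (U k n) f
      \<le> social_cost d l n x y + measure_pmf.expectation (U k n) w"
proof -
  note integrable = integrable_U[OF assms(2)]
  have "measure_pmf.expectation (U k n) f
      \<le> measure_pmf.expectation (U k n) (\<lambda>S. panel_cost d l k x y S + w S)"
    using assms(3) set_pmf_U[OF assms(2)]
    by (intro integral_mono_AE[OF integrable integrable] AE_pmfI) simp
  also have "\<dots> = social_cost d l n x y + measure_pmf.expectation (U k n) w"
    by (simp only: Bochner_Integration.integral_add[OF integrable integrable]
        expectation_U_panel_cost[OF assms(1,2)])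
  finally show ?thesis .
qed

theorem lemma4p13:
  fixes X C :: "'a set" and d :: "'a \<Rightarrow> 'a \<Rightarrow> real" and l n k :: nat
    and x :: "nat \<Rightarrow> 'a" and ybar :: "nat set \<Rightarrow> nat \<Rightarrow> 'a"
  assumes "metric01 X d"
    and "C \<subseteq> X" and "C \<noteq> {}"
    and "l \<ge> 1"
    and "\<forall>i\<in>{1..n}. x i \<in> X"
    and "1 \<le> k" and "k \<le> n"
    and "\<forall>S\<in>panels k n. feasible C l (ybar S) \<and>
           (\<forall>y. feasible C l y \<longrightarrow> panel_cost d l k x (ybar S) S \<le> panel_cost d l k x y S)"
  shows "measure_pmf.expectation (U k n) (\<lambda>S. social_cost d l n x (ybar S))
         \<le> social_opt d C l n x
           + measure_pmf.expectation (U k n) (\<lambda>S. W d (phi x {1..n}) (phi x S))"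
proof -
  define w where "w S = W d (phi x {1..n}) (phi x S)" for S
  have "measure_pmf.expectation (U k n) (\<lambda>S. social_cost d l n x (ybar S))
      \<le> social_cost d l n x y + measure_pmf.expectation (U k n) w" if "feasible C l y" for y
  proof (rule expectation_U_le_social_cost_add[OF assms(6,7)])
    fix S assume S: "S \<in> panels k n"
    have "feasible C l (ybar S)"
      and optimal: "panel_cost d l k x (ybar S) S \<le> panel_cost d l k x y S"
      using bspec[OF assms(8) S] \<open>feasible C l y\<close> by simp_all
    then have "social_cost d l n x (ybar S) \<le> panel_cost d l k x (ybar S) S + w S"
      unfolding w_def
      using social_cost_le_panel_cost_add_W[OF assms(1,2,4) _ assms(5) S assms(6)] by blast
    with optimal show "social_cost d l n x (ybar S) \<le> panel_cost d l k x y S + w S"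
      by linarith
  qed
  moreover obtain c where "c \<in> C" using assms(3) by auto
  then have "feasible C l (\<lambda>_. c)" unfolding feasible_def by simp
  then have "{y. feasible C l y} \<noteq> {}" by blast
  ultimately have "measure_pmf.expectation (U k n) (\<lambda>S. social_cost d l n x (ybar S))
      - measure_pmf.expectation (U k n) w \<le> social_opt d C l n x"
    unfolding social_opt_def by (intro cINF_greatest) (auto simp: diff_le_eq)
  then show ?thesis unfolding w_def by simp
qed

end
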